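(* Let $\kappa\in(0,\infty)$. There exists $C\in(0,\infty)$ such that for all $R,N\in[1,\infty)$ $$-C\le\sum_{l=0}^\infty\frac{2l+1}{2R^2\,(1+l(l+1)/R^2)\,(1+l(l+1)/(NR)^2)^\kappa}-\log(N+1)\le C.$$ *)

theory Defs
  imports "HOL-Analysis.Analysis"
begin

end

theory Submission
  imports Defs
begin

text \<open>
  Write \<open>c = R\<^sup>2\<close> and \<open>M = N R\<close>. Without the damping factor the \<open>l\<close>-th term is
  \<open>(2l + 1) / (2 (c + l(l + 1)))\<close>; as \<open>2l + 1\<close> is essentially the increment of \<open>c + l(l + 1)\<close>,
  its partial sums up to \<open>L\<close> equal \<open>(ln (c + L(L + 1)) - ln c) / 2\<close> up to an error bounded by
  \<open>\<Sum> 1 / (2 (c + l(l + 1))) \<le> 1\<close>. Cut the series at \<open>L = \<lfloor>M\<rfloor>\<close>. For \<open>l \<le> L\<close> the damping factor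
  \<open>(1 + l(l + 1) / M\<^sup>2) powr -\<kappa>\<close> is at least \<open>1 - \<kappa> l(l + 1) / M\<^sup>2\<close>, which costs at most \<open>2\<kappa>\<close>
  in total; for \<open>l > L\<close> the term is at most \<open>M powr 2\<kappa> * l powr (-2\<kappa> - 1)\<close>, and these telescope
  to at most \<open>2 powr 2\<kappa> / 2\<kappa>\<close>. Finally \<open>c + L(L + 1)\<close> lies between \<open>R\<^sup>2 (N + 1)\<^sup>2 / 4\<close> and
  \<open>R\<^sup>2 (N + 1)\<^sup>2\<close>, so the logarithm is \<open>ln (N + 1)\<close> up to \<open>ln 2\<close>.
\<close>

definition resolvent_weight :: "real \<Rightarrow> nat \<Rightarrow> real" where
  "resolvent_weight c l = (2 * real l + 1) / (2 * (c + real l * (real l + 1)))"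

text \<open>With \<open>c = R\<^sup>2\<close> and \<open>M = N R\<close> this is the \<open>l\<close>-th summand of the theorem.\<close>

definition regularised_weight :: "real \<Rightarrow> real \<Rightarrow> real \<Rightarrow> nat \<Rightarrow> real" where
  "regularised_weight \<kappa> c M l =
     resolvent_weight c l / (1 + real l * (real l + 1) / M^2) powr \<kappa>"

lemma resolvent_weight_nonneg: "c \<ge> 0 \<Longrightarrow> 0 \<le> resolvent_weight c l"
  unfolding resolvent_weight_def by simp

lemma sum_inverse_shifted_pronic_le:
  fixes c :: real
  assumes "c \<ge> 1"
  shows "(\<Sum>l\<le>n. 1 / (2 * (c + real l * (real l + 1)))) \<le> 1"
proof -
  have "(\<Sum>l\<le>n. 1 / (2 * (c + real l * (real l + 1)))) \<le> 1 - 1 / (real n + 2)"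
  proof (induction n)
    case 0
    then show ?case using assms by (simp add: field_simps)
  next
    case (Suc n)
    have pos: "0 < c + real (Suc n) * (real (Suc n) + 1)"
      using assms by (simp add: add_pos_nonneg)
    have "(real n + 2) * (real n + 3) \<le> 2 * (c + real (Suc n) * (real (Suc n) + 1))"
      using assms by (simp add: algebra_simps) (smt (verit) mult_nonneg_nonneg of_nat_0_le_iff)
    then have "1 / (2 * (c + real (Suc n) * (real (Suc n) + 1))) \<le> 1 / ((real n + 2) * (real n + 3))"
      using pos by (intro divide_left_mono mult_pos_pos) auto
    also have "\<dots> = 1 / (real n + 2) - 1 / (real (Suc n) + 2)"
      by (simp add: field_simps)
    finally show ?case using Suc by simp
  qed
  also have "\<dots> \<le> 1" by simp
  finally show ?thesis .
qed

lemma sum_resolvent_weight_le_ln: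
  fixes c :: real
  assumes "c \<ge> 1"
  shows "(\<Sum>l\<le>n. resolvent_weight c l) \<le> (ln (c + real n * (real n + 1)) - ln c) / 2 + 1"
proof -
  define b where "b l = c + real l * (real l + 1)" for l :: nat
  have b_pos: "b l > 0" for l
    unfolding b_def using assms by (simp add: add_pos_nonneg)
  have b_Suc: "b (Suc l) = b l + 2 * real l + 2" for l
    by (simp add: b_def algebra_simps)
  have step: "resolvent_weight c (Suc l)
      \<le> (ln (b (Suc l)) - ln (b l)) / 2 + 1 / (2 * b (Suc l))" for l
  proof -
    have "ln (b l) - ln (b (Suc l)) \<le> (b l - b (Suc l)) / b (Suc l)"
      using ln_diff_le b_pos by blast
    moreover have "resolvent_weight c (Suc l) = (2 * real l + 3) / (2 * b (Suc l))"
      by (simp add: resolvent_weight_def b_def algebra_simps)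
    ultimately show ?thesis
      using b_pos[of "Suc l"] unfolding b_Suc by (simp add: field_simps)
  qed
  have "(\<Sum>l\<le>n. resolvent_weight c l) \<le> (ln (b n) - ln c) / 2 + (\<Sum>l\<le>n. 1 / (2 * b l))"
  proof (induction n)
    case 0
    then show ?case by (simp add: resolvent_weight_def b_def)
  next
    case (Suc n)
    then show ?case using step[of n] by (simp add: diff_divide_distrib)
  qed
  also have "(\<Sum>l\<le>n. 1 / (2 * b l)) \<le> 1"
    unfolding b_def by (rule sum_inverse_shifted_pronic_le[OF assms])
  finally show ?thesis by (simp add: b_def)
qed

lemma sum_resolvent_weight_ge_ln:
  fixes c :: real
  assumes "c \<ge> 1"
  shows "(\<Sum>l\<le>n. resolvent_weight c l) \<ge> (ln (c + real n * (real n + 1)) - ln c) / 2 - 1"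
proof -
  define b where "b l = c + real l * (real l + 1)" for l :: nat
  have b_pos: "b l > 0" for l
    unfolding b_def using assms by (simp add: add_pos_nonneg)
  have b_Suc: "b (Suc l) = b l + 2 * real l + 2" for l
    by (simp add: b_def algebra_simps)
  have step: "(ln (b (Suc l)) - ln (b l)) / 2 - 1 / (2 * b l) \<le> resolvent_weight c l" for l
  proof -
    have "ln (b (Suc l)) - ln (b l) \<le> (b (Suc l) - b l) / b l"
      using ln_diff_le b_pos by blast
    moreover have "resolvent_weight c l = (2 * real l + 1) / (2 * b l)"
      by (simp add: resolvent_weight_def b_def)
    ultimately show ?thesis
      using b_pos[of l] unfolding b_Suc by (simp add: field_simps)
  qed
  have "(ln (b (Suc n)) - ln c) / 2 - (\<Sum>l\<le>n. 1 / (2 * b l)) \<le> (\<Sum>l\<le>n. resolvent_weight c l)"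
  proof (induction n)
    case 0
    then show ?case using step[of 0] by (simp add: b_def)
  next
    case (Suc n)
    then show ?case using step[of "Suc n"] by (simp add: diff_divide_distrib)
  qed
  moreover have "(\<Sum>l\<le>n. 1 / (2 * b l)) \<le> 1"
    unfolding b_def by (rule sum_inverse_shifted_pronic_le[OF assms])
  moreover have "ln (b n) \<le> ln (b (Suc n))"
    using b_pos[of n] by (simp add: b_Suc)
  ultimately show ?thesis unfolding b_def diff_divide_distrib by linarith
qed

lemma inverse_one_plus_powr_bounds:
  fixes \<kappa> y :: real
  assumes "\<kappa> \<ge> 0" "y \<ge> 0"
  shows "1 - \<kappa> * y \<le> 1 / (1 + y) powr \<kappa>" "1 / (1 + y) powr \<kappa> \<le> 1"
proof -
  have "(1 + y) powr \<kappa> \<le> exp y powr \<kappa>"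
    using assms by (intro powr_mono2) (auto simp: exp_ge_add_one_self)
  also have "\<dots> = exp (\<kappa> * y)"
    by (simp add: powr_def)
  finally have "exp (-(\<kappa> * y)) \<le> 1 / (1 + y) powr \<kappa>"
    using assms by (simp add: exp_minus field_simps)
  then show "1 - \<kappa> * y \<le> 1 / (1 + y) powr \<kappa>"
    using exp_ge_add_one_self[of "-(\<kappa> * y)"] by linarith
  have "1 \<le> (1 + y) powr \<kappa>"
    using assms by (intro ge_one_powr_ge_zero) auto
  then show "1 / (1 + y) powr \<kappa> \<le> 1"
    by (simp add: divide_le_eq)
qed

lemma powr_neg_le_telescope:
  fixes a x :: real
  assumes "a > 0" "x > 1"
  shows "x powr (-a - 1) \<le> ((x - 1) powr (-a) - x powr (-a)) / a"
proof -
  have "ln (x - 1) - ln x \<le> (x - 1 - x) / x"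
    using assms by (intro ln_diff_le) auto
  then have "a * (1 / x) \<le> a * (ln x - ln (x - 1))"
    using assms by (intro mult_left_mono) auto
  then have "a / x \<le> a * (ln x - ln (x - 1))"
    by simp
  also have "\<dots> \<le> exp (a * (ln x - ln (x - 1))) - 1"
    using exp_ge_add_one_self[of "a * (ln x - ln (x - 1))"] by linarith
  finally have "(1 + a / x) * x powr (-a) \<le> exp (a * (ln x - ln (x - 1))) * x powr (-a)"
    by (intro mult_right_mono) auto
  also have "\<dots> = (x - 1) powr (-a)"
    using assms by (simp add: powr_def exp_add[symmetric] algebra_simps)
  finally have "a * (x powr (-a) / x) \<le> (x - 1) powr (-a) - x powr (-a)"
    by (simp add: algebra_simps)
  moreover have "x powr (-a) / x = x powr (-a - 1)"
    using assms by (simp add: powr_diff)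
  ultimately show ?thesis
    using assms by (simp add: field_simps)
qed

lemma regularised_weight_eq:
  "regularised_weight \<kappa> c M l = resolvent_weight c l * (1 / (1 + real l * (real l + 1) / M^2) powr \<kappa>)"
  by (simp add: regularised_weight_def)

lemma regularised_weight_nonneg: "c \<ge> 0 \<Longrightarrow> 0 \<le> regularised_weight \<kappa> c M l"
  by (simp add: regularised_weight_def resolvent_weight_nonneg)

lemma regularised_weight_le:
  assumes "\<kappa> \<ge> 0" "c \<ge> 0"
  shows "regularised_weight \<kappa> c M l \<le> resolvent_weight c l"
  unfolding regularised_weight_eq
  using inverse_one_plus_powr_bounds(2)[OF assms(1), of "real l * (real l + 1) / M^2"]
    resolvent_weight_nonneg[OF assms(2)]
  by (intro mult_left_le) auto

lemma regularised_weight_ge: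
  assumes "\<kappa> \<ge> 0" "c \<ge> 0"
  shows "resolvent_weight c l - \<kappa> * (2 * real l + 1) / (2 * M^2) \<le> regularised_weight \<kappa> c M l"
proof -
  define y where "y = real l * (real l + 1) / M^2"
  have "resolvent_weight c l * y
      = (2 * real l + 1) / (2 * M^2) * (real l * (real l + 1) / (c + real l * (real l + 1)))"
    unfolding resolvent_weight_def y_def by (simp add: field_simps)
  also have "\<dots> \<le> (2 * real l + 1) / (2 * M^2)"
  proof (rule mult_left_le)
    have "0 \<le> real l * (real l + 1)" by simp
    with assms(2) show "real l * (real l + 1) / (c + real l * (real l + 1)) \<le> 1"
      by (smt (verit) divide_le_eq_1)
  qed simp
  finally have "\<kappa> * (resolvent_weight c l * y) \<le> \<kappa> * ((2 * real l + 1) / (2 * M^2))"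
    by (rule mult_left_mono[OF _ assms(1)])
  moreover have "resolvent_weight c l * (1 - \<kappa> * y) \<le> regularised_weight \<kappa> c M l"
    unfolding regularised_weight_eq y_def
    using inverse_one_plus_powr_bounds(1)[OF assms(1), of "real l * (real l + 1) / M^2"]
      resolvent_weight_nonneg[OF assms(2)]
    by (intro mult_left_mono) auto
  ultimately show ?thesis
    by (simp add: algebra_simps)
qed

lemma regularised_weight_le_telescope:
  assumes "\<kappa> > 0" "c \<ge> 0" "M \<ge> 1" "real l > M"
  shows "regularised_weight \<kappa> c M l
    \<le> M powr (2 * \<kappa>) / (2 * \<kappa>) * ((real l - 1) powr (-(2 * \<kappa>)) - real l powr (-(2 * \<kappa>)))"
proof -
  define x where "x = real l"
  define a where "a = 2 * \<kappa>"
  have x: "x > 1" "M > 0"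
    using assms unfolding x_def by auto
  have "resolvent_weight c l \<le> (2 * x + 1) / (2 * (x * (x + 1)))"
    unfolding resolvent_weight_def x_def[symmetric]
    using assms(2) x by (intro divide_left_mono mult_pos_pos) (auto intro!: add_nonneg_pos)
  also have "\<dots> \<le> (2 * x + 2) / (2 * (x * (x + 1)))"
    using x by (intro divide_right_mono) auto
  also have "\<dots> = 1 / x"
    using x by (simp add: divide_simps)
  finally have weight_le: "resolvent_weight c l \<le> 1 / x" .
  have "(x / M) powr a = ((x / M) powr 2) powr \<kappa>"
    by (simp add: powr_powr a_def)
  also have "\<dots> \<le> (1 + x * (x + 1) / M^2) powr \<kappa>"
    using x assms(1) by (intro powr_mono2) (auto simp: power_divide field_simps powr_realpow power2_eq_square)
  finally have damping_ge: "(x / M) powr a \<le> (1 + x * (x + 1) / M^2) powr \<kappa>" .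
  have "regularised_weight \<kappa> c M l \<le> (1 / x) / (x / M) powr a"
    unfolding regularised_weight_def x_def[symmetric]
    using weight_le damping_ge x by (intro frac_le) auto
  also have "\<dots> = M powr a * x powr (-a - 1)"
    using x by (simp add: powr_divide powr_diff powr_minus field_simps)
  also have "\<dots> \<le> M powr a * (((x - 1) powr (-a) - x powr (-a)) / a)"
    using powr_neg_le_telescope[of a x] assms(1) x by (intro mult_left_mono) (auto simp: a_def)
  finally show ?thesis
    by (simp add: x_def a_def)
qed

lemma sum_regularised_weight_tail_le:
  assumes "\<kappa> > 0" "c \<ge> 0" "M \<ge> 1" "M < real L + 1"
  shows "(\<Sum>k<m. regularised_weight \<kappa> c M (Suc L + k)) \<le> 2 powr (2 * \<kappa>) / (2 * \<kappa>)"
proof -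
  define a where "a = 2 * \<kappa>"
  define D where "D l = real l powr (-a)" for l :: nat
  have a: "a > 0"
    using assms(1) by (simp add: a_def)
  have "0 < real L"
    using assms(3,4) by linarith
  then have L: "real L \<ge> 1"
    by simp
  then have M_le: "M \<le> 2 * real L"
    using assms(4) by linarith
  have "regularised_weight \<kappa> c M (Suc L + k) \<le> M powr a / a * (D (L + k) - D (Suc (L + k)))" for k
    using regularised_weight_le_telescope[OF assms(1-3), of "Suc L + k"] assms(4)
    by (simp add: D_def a_def)
  then have "(\<Sum>k<m. regularised_weight \<kappa> c M (Suc L + k))
      \<le> (\<Sum>k<m. M powr a / a * (D (L + k) - D (Suc (L + k))))"
    by (intro sum_mono)
  also have "\<dots> = M powr a / a * (D L - D (L + m))"
    using sum_lessThan_telescope'[of "\<lambda>k. D (L + k)" m]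
    by (simp add: sum_divide_distrib[symmetric] sum_distrib_left[symmetric])
  also have "\<dots> \<le> M powr a / a * D L"
    using a by (intro mult_left_mono) (auto simp: D_def)
  also have "\<dots> = (M / real L) powr a / a"
    using L assms(3) by (simp add: D_def powr_divide powr_minus_divide)
  also have "\<dots> \<le> 2 powr a / a"
    using a L assms(3,4) M_le
    by (intro divide_right_mono powr_mono2) (auto simp: divide_le_eq)
  finally show ?thesis
    by (simp add: a_def)
qed

lemma sum_regularised_weight_le:
  assumes "\<kappa> > 0" "c \<ge> 0" "M \<ge> 1" "M < real L + 1"
  shows "(\<Sum>l<n. regularised_weight \<kappa> c M l)
    \<le> (\<Sum>l\<le>L. resolvent_weight c l) + 2 powr (2 * \<kappa>) / (2 * \<kappa>)"
proof -
  let ?f = "regularised_weight \<kappa> c M"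
  have split: "(\<Sum>l<Suc L + m. ?f l) = (\<Sum>l\<le>L. ?f l) + (\<Sum>k<m. ?f (Suc L + k))" for m
    by (induction m) (simp_all add: lessThan_Suc_atMost[symmetric])
  have "(\<Sum>l<n. ?f l) \<le> (\<Sum>l<Suc L + n. ?f l)"
    using assms(2) by (intro sum_mono2) (auto simp: regularised_weight_nonneg)
  also have "\<dots> \<le> (\<Sum>l\<le>L. resolvent_weight c l) + 2 powr (2 * \<kappa>) / (2 * \<kappa>)"
    unfolding split
    using regularised_weight_le[of \<kappa> c M] sum_regularised_weight_tail_le[OF assms] assms(1,2)
    by (intro add_mono sum_mono) auto
  finally show ?thesis .
qed

lemma summable_regularised_weight:
  assumes "\<kappa> > 0" "c \<ge> 0" "M \<ge> 1"
  shows "summable (regularised_weight \<kappa> c M)"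
proof (rule bounded_imp_summable)
  have "M < real (nat \<lceil>M\<rceil>) + 1"
    by linarith
  then show "(\<Sum>k\<le>n. regularised_weight \<kappa> c M k)
      \<le> (\<Sum>l\<le>nat \<lceil>M\<rceil>. resolvent_weight c l) + 2 powr (2 * \<kappa>) / (2 * \<kappa>)" for n
    using sum_regularised_weight_le[OF assms, of "nat \<lceil>M\<rceil>" "Suc n"]
    by (simp add: lessThan_Suc_atMost)
qed (use assms(2) regularised_weight_nonneg in auto)

lemma suminf_regularised_weight_le:
  assumes "\<kappa> > 0" "c \<ge> 0" "M \<ge> 1" "M < real L + 1"
  shows "(\<Sum>l. regularised_weight \<kappa> c M l)
    \<le> (\<Sum>l\<le>L. resolvent_weight c l) + 2 powr (2 * \<kappa>) / (2 * \<kappa>)"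
  using summable_regularised_weight[OF assms(1-3)] sum_regularised_weight_le[OF assms]
  by (rule suminf_le_const)

lemma suminf_regularised_weight_ge:
  assumes "\<kappa> > 0" "c \<ge> 0" "M \<ge> 1" "real L \<le> M"
  shows "(\<Sum>l\<le>L. resolvent_weight c l) - 2 * \<kappa> \<le> (\<Sum>l. regularised_weight \<kappa> c M l)"
proof -
  have odd_sum: "(\<Sum>l\<le>n. 2 * real l + 1) = (real n + 1)^2" for n
    by (induction n) (simp_all add: power2_eq_square algebra_simps)
  have "(\<Sum>l\<le>L. \<kappa> * (2 * real l + 1) / (2 * M^2)) = \<kappa> / 2 * ((real L + 1) / M)^2"
    by (simp add: sum_divide_distrib[symmetric] sum_distrib_left[symmetric] odd_sum power_divide)
  also have "\<dots> \<le> \<kappa> / 2 * 2^2"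
    using assms by (intro mult_left_mono power_mono) (auto simp: divide_le_eq)
  finally have loss: "(\<Sum>l\<le>L. \<kappa> * (2 * real l + 1) / (2 * M^2)) \<le> 2 * \<kappa>"
    by simp
  have "(\<Sum>l\<le>L. resolvent_weight c l) - (\<Sum>l\<le>L. \<kappa> * (2 * real l + 1) / (2 * M^2))
      \<le> (\<Sum>l\<le>L. regularised_weight \<kappa> c M l)"
    unfolding sum_subtractf[symmetric]
    using regularised_weight_ge assms(1,2) by (intro sum_mono) auto
  also have "\<dots> \<le> (\<Sum>l. regularised_weight \<kappa> c M l)"
    using summable_regularised_weight[OF assms(1-3)] regularised_weight_nonneg assms(2)
    by (intro sum_le_suminf) auto
  finally show ?thesis
    using loss by linarith
qed

lemma shifted_pronic_floor_bounds:
  fixes R N :: real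
  assumes "R \<ge> 1" "N \<ge> 1" "real L \<le> N * R" "N * R < real L + 1"
  shows "R^2 * (N + 1)^2 / 4 \<le> R^2 + real L * (real L + 1)"
    and "R^2 + real L * (real L + 1) \<le> R^2 * (N + 1)^2"
proof -
  define M where "M = N * R"
  have M: "M \<ge> 1"
    using assms(1,2) unfolding M_def by (metis mult_mono' mult_1 zero_le_one)
  have NR: "N * R \<le> N * R^2"
    using assms(1,2) by (simp add: power2_eq_square)
  have "(M - 1) * M \<le> real L * (real L + 1)"
    using assms(3,4) M unfolding M_def by (intro mult_mono) auto
  then have "R^2 * (1 + N^2 - N) \<le> R^2 + real L * (real L + 1)"
    using NR unfolding M_def by (simp add: algebra_simps power2_eq_square)
  moreover have "R^2 * (N + 1)^2 / 4 \<le> R^2 * (1 + N^2 - N)"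
  proof -
    have "(N + 1)^2 / 4 \<le> 1 + N^2 - N"
      using zero_le_power2[of "N - 1"] by (simp add: power2_eq_square field_simps)
    then have "R^2 * ((N + 1)^2 / 4) \<le> R^2 * (1 + N^2 - N)"
      by (rule mult_left_mono) simp
    then show ?thesis
      by simp
  qed
  ultimately show "R^2 * (N + 1)^2 / 4 \<le> R^2 + real L * (real L + 1)"
    by linarith
  have "real L * (real L + 1) \<le> M * (M + 1)"
    using assms(3,4) unfolding M_def by (intro mult_mono) auto
  then have "R^2 + real L * (real L + 1) \<le> R^2 * (1 + N^2 + N)"
    using NR unfolding M_def by (simp add: algebra_simps power2_eq_square)
  also have "\<dots> \<le> R^2 * (N + 1)^2"
    using assms(2) by (intro mult_left_mono) (auto simp: power2_eq_square algebra_simps)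
  finally show "R^2 + real L * (real L + 1) \<le> R^2 * (N + 1)^2" .
qed

lemma ln_shifted_pronic_floor_bounds:
  fixes R N :: real
  assumes "R \<ge> 1" "N \<ge> 1" "real L \<le> N * R" "N * R < real L + 1"
  shows "ln (N + 1) - ln 2 \<le> (ln (R^2 + real L * (real L + 1)) - ln (R^2)) / 2"
    and "(ln (R^2 + real L * (real L + 1)) - ln (R^2)) / 2 \<le> ln (N + 1)"
proof -
  have pos: "R^2 > 0" "N + 1 > 0" "R^2 + real L * (real L + 1) > 0"
    using assms(1,2) by (auto intro: add_pos_nonneg)
  have "ln (R^2 * (N + 1)^2 / 4) \<le> ln (R^2 + real L * (real L + 1))"
    using shifted_pronic_floor_bounds(1)[OF assms] pos by (subst ln_le_cancel_iff) auto
  moreover have "ln (R^2 * (N + 1)^2 / 4) = ln (R^2) + 2 * ln (N + 1) - 2 * ln 2"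
    using pos ln_realpow[of 2 2] by (simp add: ln_mult ln_div ln_realpow)
  ultimately show "ln (N + 1) - ln 2 \<le> (ln (R^2 + real L * (real L + 1)) - ln (R^2)) / 2"
    unfolding diff_divide_distrib by linarith
  have "ln (R^2 + real L * (real L + 1)) \<le> ln (R^2 * (N + 1)^2)"
    using shifted_pronic_floor_bounds(2)[OF assms] pos by (subst ln_le_cancel_iff) auto
  also have "\<dots> = ln (R^2) + 2 * ln (N + 1)"
    using pos by (simp add: ln_mult ln_realpow)
  finally show "(ln (R^2 + real L * (real L + 1)) - ln (R^2)) / 2 \<le> ln (N + 1)"
    unfolding diff_divide_distrib by linarith
qed

lemma suminf_regularised_weight_ln_bounds:
  fixes R N :: real
  assumes "\<kappa> > 0" "R \<ge> 1" "N \<ge> 1"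
  shows "ln (N + 1) - 2 - 2 * \<kappa> \<le> (\<Sum>l. regularised_weight \<kappa> (R^2) (N * R) l)"
    and "(\<Sum>l. regularised_weight \<kappa> (R^2) (N * R) l)
           \<le> ln (N + 1) + 1 + 2 powr (2 * \<kappa>) / (2 * \<kappa>)"
proof -
  define L where "L = nat \<lfloor>N * R\<rfloor>"
  have NR: "N * R \<ge> 1"
    using assms(2,3) by (metis mult_mono' mult_1 zero_le_one)
  have L: "real L \<le> N * R" "N * R < real L + 1"
    unfolding L_def using NR by linarith+
  have R2: "R^2 \<ge> 1"
    using assms(2) by (simp add: one_le_power)
  have R2_nonneg: "R^2 \<ge> 0"
    by simp
  note log_bounds = ln_shifted_pronic_floor_bounds[OF assms(2,3) L]
  show "ln (N + 1) - 2 - 2 * \<kappa> \<le> (\<Sum>l. regularised_weight \<kappa> (R^2) (N * R) l)"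
    using suminf_regularised_weight_ge[OF assms(1) R2_nonneg NR L(1)]
      sum_resolvent_weight_ge_ln[OF R2, of L]
      log_bounds(1) ln_2_less_1 R2 by linarith
  show "(\<Sum>l. regularised_weight \<kappa> (R^2) (N * R) l)
      \<le> ln (N + 1) + 1 + 2 powr (2 * \<kappa>) / (2 * \<kappa>)"
    using suminf_regularised_weight_le[OF assms(1) R2_nonneg NR L(2)]
      sum_resolvent_weight_le_ln[OF R2, of L]
      log_bounds(2) R2 by linarith
qed

theorem mainTheorem8:
  fixes \<kappa> :: real
  assumes "\<kappa> > 0"
  shows "\<exists>C::real. C > 0 \<and> (\<forall>R N :: real. R \<ge> 1 \<longrightarrow> N \<ge> 1 \<longrightarrow>
     -C \<le> (\<Sum>l. (2 * real l + 1) /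
              (2 * R^2 * (1 + real l * (real l + 1) / R^2)
                 * (1 + real l * (real l + 1) / (N * R)^2) powr \<kappa>)) - ln (N + 1)
   \<and> (\<Sum>l. (2 * real l + 1) /
              (2 * R^2 * (1 + real l * (real l + 1) / R^2)
                 * (1 + real l * (real l + 1) / (N * R)^2) powr \<kappa>)) - ln (N + 1) \<le> C)"
proof (intro exI conjI allI impI)
  define C where "C = 2 + 2 * \<kappa> + 2 powr (2 * \<kappa>) / (2 * \<kappa>)"
  show "C > 0"
    unfolding C_def using assms by (simp add: add_pos_nonneg)
  fix R N :: real
  assume R: "R \<ge> 1" and N: "N \<ge> 1"
  have "2 * R^2 * (1 + real l * (real l + 1) / R^2) = 2 * (R^2 + real l * (real l + 1))" for l
    using R by (simp add: field_simps)
  then have summand_eq: "(\<lambda>l. (2 * real l + 1) /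
              (2 * R^2 * (1 + real l * (real l + 1) / R^2)
                 * (1 + real l * (real l + 1) / (N * R)^2) powr \<kappa>))
      = regularised_weight \<kappa> (R^2) (N * R)"
    by (simp add: fun_eq_iff regularised_weight_def resolvent_weight_def)
  have "0 \<le> 2 powr (2 * \<kappa>) / (2 * \<kappa>)"
    using assms by simp
  with suminf_regularised_weight_ln_bounds[OF assms R N] assms
  show "-C \<le> (\<Sum>l. (2 * real l + 1) /
              (2 * R^2 * (1 + real l * (real l + 1) / R^2)
                 * (1 + real l * (real l + 1) / (N * R)^2) powr \<kappa>)) - ln (N + 1)"
    and "(\<Sum>l. (2 * real l + 1) /
              (2 * R^2 * (1 + real l * (real l + 1) / R^2)
                 * (1 + real l * (real l + 1) / (N * R)^2) powr \<kappa>)) - ln (N + 1) \<le> C"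
    unfolding summand_eq C_def by - linarith+
qed

end
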